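(* Let $1 \le p < \infty$ and $n\ge1$. Then $$U(n,p) \le \prod_{k=1}^n w(k,p).$$
   Context: Let $q = 1/p$ (with $0^q=0$). For $n\ge 1$, $U(n,p)$ denotes the maximum of $\mathrm{per}(A)=\sum_{\sigma\in S_n}\prod_{i=1}^n a_{i\sigma(i)}$ over all real $n\times n$ matrices $A$ each of whose rows has $\ell_p$-norm equal to $1$. For $k\ge1$ let $\Delta_k=\{y\in\mathbb R^k: y_i\ge 0,\ \sum_i y_i=1\}$ be the set of stochastic vectors, and define $P_k(y) = \sum_{i=1}^k y_i^q \prod_{j\ne i}(1-y_j)^q$ for $y\in\Delta_k$. Then $w(k,p)=\max_{y\in\Delta_k} P_k(y)$. *)

theory Defs
  imports "HOL-Combinatorics.Permutations" Complex_Main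
begin

(* n x n real matrices are represented as functions nat => nat => real, indices 0..n-1 *)

definition per :: "nat \<Rightarrow> (nat \<Rightarrow> nat \<Rightarrow> real) \<Rightarrow> real" where
  "per n A = (\<Sum>\<sigma> | \<sigma> permutes {..<n}. \<Prod>i<n. A i (\<sigma> i))"

definition row_pnorm :: "real \<Rightarrow> nat \<Rightarrow> (nat \<Rightarrow> nat \<Rightarrow> real) \<Rightarrow> nat \<Rightarrow> real" where
  "row_pnorm p n A i = (\<Sum>j<n. \<bar>A i j\<bar> powr p) powr (1 / p)"

definition U :: "nat \<Rightarrow> real \<Rightarrow> real" where
  "U n p = Sup {per n A | A. \<forall>i<n. row_pnorm p n A i = 1}"

definition stoch :: "nat \<Rightarrow> (nat \<Rightarrow> real) set" where
  "stoch k = {y. (\<forall>i<k. y i \<ge> 0) \<and> (\<Sum>i<k. y i) = 1}"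

(* powr satisfies 0 powr q = 0 *)
definition Pk :: "nat \<Rightarrow> real \<Rightarrow> (nat \<Rightarrow> real) \<Rightarrow> real" where
  "Pk k p y = (\<Sum>i<k. y i powr (1 / p) * (\<Prod>j\<in>{..<k} - {i}. (1 - y j) powr (1 / p)))"

definition w :: "nat \<Rightarrow> real \<Rightarrow> real" where
  "w k p = Sup (Pk k p ` stoch k)"

end

theory Submission
  imports Defs "HOL-Analysis.Infinite_Products"
begin

text \<open>
  Induction on \<open>n\<close>. Let \<open>A\<close> have order \<open>n + 1\<close> and rows of unit \<open>\<ell>\<^sub>p\<close>-norm. The column
  masses \<open>\<Sum>\<^sub>i |a\<^sub>i\<^sub>c|\<^sup>p\<close> add up to \<open>n + 1\<close>, so some column \<open>c\<close> has mass at most \<open>1\<close>, i.e.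
  \<open>x\<^sub>i = |a\<^sub>i\<^sub>c|\<^sup>p\<close> is substochastic. Expand \<open>per |A|\<close> along column \<open>c\<close>: the minor
  of \<open>a\<^sub>b\<^sub>c\<close> has row norms \<open>(1 - x\<^sub>i)\<^sup>q\<close> (\<open>i \<noteq> b\<close>), so by homogeneity of the permanent in
  each row and the induction hypothesis its permanent is at most
  \<open>W\<^sub>n \<Prod>\<^sub>i\<^sub>\<noteq>\<^sub>b (1 - x\<^sub>i)\<^sup>q\<close>, where \<open>W\<^sub>n = \<Prod>\<^sub>k\<^sub>\<le>\<^sub>n w(k,p)\<close>. Summing gives
  \<open>per A \<le> W\<^sub>n P\<^sub>n\<^sub>+\<^sub>1(x)\<close>. Finally \<open>P\<^sub>k(x) \<le> w(k,p)\<close> also for substochastic \<open>x\<close>: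
  multiplying all odds \<open>x\<^sub>i / (1 - x\<^sub>i)\<close> by a suitable \<open>D \<ge> 1\<close> makes \<open>x\<close> stochastic, and by
  the Weierstrass product inequality this does not decrease \<open>P\<^sub>k\<close>.
\<close>

section \<open>Permanents\<close>

lemma per_0 [simp]: "per 0 A = 1"
  unfolding per_def by simp

lemma per_transpose: "per n (\<lambda>i j. A j i) = per n A"
proof -
  have "per n A = (\<Sum>\<sigma> | \<sigma> permutes {..<n}. \<Prod>i<n. A i (inv \<sigma> i))"
    unfolding per_def by (rule sum_permutations_inverse)
  also have "\<dots> = (\<Sum>\<sigma> | \<sigma> permutes {..<n}. \<Prod>i<n. A (\<sigma> i) i)"
  proof (rule sum.cong[OF refl])
    fix \<sigma> assume "\<sigma> \<in> {\<sigma>. \<sigma> permutes {..<n}}"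
    then have \<sigma>: "\<sigma> permutes {..<n}" by simp
    have "(\<Prod>i<n. A i (inv \<sigma> i)) = (\<Prod>i<n. A (\<sigma> i) (inv \<sigma> (\<sigma> i)))"
      using prod.permute[OF \<sigma>, of "\<lambda>i. A i (inv \<sigma> i)"] by (simp add: o_def)
    also have "\<dots> = (\<Prod>i<n. A (\<sigma> i) i)"
      using permutes_inverses(2)[OF \<sigma>] by simp
    finally show "(\<Prod>i<n. A i (inv \<sigma> i)) = (\<Prod>i<n. A (\<sigma> i) i)" .
  qed
  also have "\<dots> = per n (\<lambda>i j. A j i)"
    unfolding per_def ..
  finally show ?thesis ..
qed

lemma per_permute_columns:
  assumes "\<tau> permutes {..<n}"
  shows "per n (\<lambda>i j. A i (\<tau> j)) = per n A"
  unfolding per_def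
  using setum_permutations_compose_left[OF assms, of "\<lambda>\<sigma>. \<Prod>i<n. A i (\<sigma> i)"]
  by (simp add: o_def)

lemma per_le_per_abs: "per n A \<le> per n (\<lambda>i j. \<bar>A i j\<bar>)"
proof -
  have "per n A \<le> (\<Sum>\<sigma> | \<sigma> permutes {..<n}. \<bar>\<Prod>i<n. A i (\<sigma> i)\<bar>)"
    unfolding per_def by (rule order_trans[OF abs_ge_self sum_abs])
  also have "\<dots> = per n (\<lambda>i j. \<bar>A i j\<bar>)"
    unfolding per_def by (simp add: abs_prod)
  finally show ?thesis .
qed

lemma per_mult_rows: "per n (\<lambda>i j. c i * A i j) = (\<Prod>i<n. c i) * per n A"
  unfolding per_def by (simp add: prod.distrib sum_distrib_left)

lemma per_eq_0_if_zero_row: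
  assumes "i < n" "\<And>j. j < n \<Longrightarrow> A i j = 0"
  shows "per n A = 0"
  unfolding per_def
proof (rule sum.neutral, intro ballI)
  fix \<sigma> assume "\<sigma> \<in> {\<sigma>. \<sigma> permutes {..<n}}"
  then have "\<sigma> i < n" using permutes_in_image assms(1) by fastforce
  then show "(\<Prod>i<n. A i (\<sigma> i)) = 0"
    using assms by (intro prod_zero) auto
qed

lemma per_expand_last_row:
  "per (Suc n) A = (\<Sum>b<Suc n. A n b * per n (\<lambda>i j. A i (Transposition.transpose n b j)))"
proof -
  have ins: "{..<Suc n} = insert n {..<n}" by auto
  have "per (Suc n) A = (\<Sum>b\<in>insert n {..<n}. \<Sum>\<sigma> | \<sigma> permutes {..<n}.
      \<Prod>i\<in>insert n {..<n}. A i ((Transposition.transpose n b \<circ> \<sigma>) i))"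
    unfolding per_def ins by (rule sum_over_permutations_insert) auto
  also have "\<dots> = (\<Sum>b\<in>insert n {..<n}. \<Sum>\<sigma> | \<sigma> permutes {..<n}.
      A n b * (\<Prod>i<n. A i (Transposition.transpose n b (\<sigma> i))))"
  proof (intro sum.cong refl)
    fix b \<sigma> assume "\<sigma> \<in> {\<sigma>. \<sigma> permutes {..<n}}"
    then have "\<sigma> n = n" by (simp add: permutes_not_in)
    then show "(\<Prod>i\<in>insert n {..<n}. A i ((Transposition.transpose n b \<circ> \<sigma>) i)) =
      A n b * (\<Prod>i<n. A i (Transposition.transpose n b (\<sigma> i)))"
      by simp
  qed
  also have "\<dots> = (\<Sum>b<Suc n. A n b * per n (\<lambda>i j. A i (Transposition.transpose n b j)))"
    unfolding per_def ins by (simp add: sum_distrib_left)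
  finally show ?thesis .
qed

lemma per_expand_last_column:
  "per (Suc n) A = (\<Sum>b<Suc n. A b n * per n (\<lambda>i j. A (Transposition.transpose n b i) j))"
proof -
  have "per (Suc n) A = per (Suc n) (\<lambda>i j. A j i)"
    by (rule per_transpose[symmetric])
  also have "\<dots> = (\<Sum>b<Suc n. A b n * per n (\<lambda>i j. A (Transposition.transpose n b j) i))"
    by (rule per_expand_last_row)
  also have "\<dots> = (\<Sum>b<Suc n. A b n * per n (\<lambda>i j. A (Transposition.transpose n b i) j))"
    by (intro sum.cong refl arg_cong2[where f = "(*)"] per_transpose)
  finally show ?thesis .
qed

section \<open>Row norms\<close>

lemma row_pnorm_eq_1_iff:
  assumes "0 < p"
  shows "row_pnorm p n A i = 1 \<longleftrightarrow> (\<Sum>j<n. \<bar>A i j\<bar> powr p) = 1"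
proof
  let ?s = "\<Sum>j<n. \<bar>A i j\<bar> powr p"
  assume "row_pnorm p n A i = 1"
  then have "(?s powr (1/p)) powr p = 1" by (simp add: row_pnorm_def)
  moreover have "0 \<le> ?s" by (intro sum_nonneg) auto
  ultimately show "?s = 1" using assms by (simp add: powr_powr)
qed (simp add: row_pnorm_def)

lemma per_eq_0_if_row_pnorm_eq_0:
  assumes "i < n" "row_pnorm p n A i = 0"
  shows "per n A = 0"
proof (rule per_eq_0_if_zero_row[OF assms(1)])
  fix j assume "j < n"
  have "\<bar>A i j\<bar> powr p \<le> (\<Sum>j<n. \<bar>A i j\<bar> powr p)"
    using \<open>j < n\<close> by (intro member_le_sum) auto
  also have "\<dots> = 0" using assms(2) by (simp add: row_pnorm_def)
  finally show "A i j = 0" by simp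
qed

lemma row_pnorm_normalize:
  assumes "0 < p" "0 < row_pnorm p n A i"
  shows "row_pnorm p n (\<lambda>i j. A i j / row_pnorm p n A i) i = 1"
proof -
  let ?r = "row_pnorm p n A i"
  have "(\<Sum>j<n. \<bar>A i j / ?r\<bar> powr p) = (\<Sum>j<n. \<bar>A i j\<bar> powr p) / ?r powr p"
    using assms(2) by (simp add: powr_divide sum_divide_distrib)
  also have "(\<Sum>j<n. \<bar>A i j\<bar> powr p) = ?r powr p"
    using assms(1) by (simp add: row_pnorm_def powr_powr sum_nonneg)
  finally have "(\<Sum>j<n. \<bar>A i j / ?r\<bar> powr p) = 1"
    using assms(2) by simp
  then show ?thesis using row_pnorm_eq_1_iff[OF assms(1)] by blast
qed

lemma per_le_mult_prod_row_pnorm: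
  assumes bound: "\<And>A. \<forall>i<n. row_pnorm p n A i = 1 \<Longrightarrow> per n A \<le> W"
    and "0 < p"
  shows "per n B \<le> W * (\<Prod>i<n. row_pnorm p n B i)"
proof (cases "\<exists>i<n. row_pnorm p n B i = 0")
  case True
  then obtain i where "i < n" "row_pnorm p n B i = 0" by blast
  then have "per n B = 0" "(\<Prod>i<n. row_pnorm p n B i) = 0"
    by (auto intro: per_eq_0_if_row_pnorm_eq_0)
  then show ?thesis by (metis mult_zero_right order_refl)
next
  case False
  let ?r = "row_pnorm p n B"
  have r_pos: "0 < ?r i" if "i < n" for i
    using False that by (simp add: row_pnorm_def)
  have "per n B = per n (\<lambda>i j. ?r i * (B i j / ?r i))"
  proof (unfold per_def, intro sum.cong prod.cong refl)
    fix \<sigma> i assume "i \<in> {..<n}"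
    then show "B i (\<sigma> i) = ?r i * (B i (\<sigma> i) / ?r i)" using r_pos[of i] by simp
  qed
  also have "\<dots> = (\<Prod>i<n. ?r i) * per n (\<lambda>i j. B i j / ?r i)"
    by (rule per_mult_rows)
  also have "\<dots> \<le> (\<Prod>i<n. ?r i) * W"
    using r_pos \<open>0 < p\<close>
    by (intro mult_left_mono bound allI impI row_pnorm_normalize prod_nonneg) (auto simp: row_pnorm_def)
  finally show ?thesis by (simp add: mult.commute)
qed

lemma exists_column_sum_le_1:
  fixes M :: "nat \<Rightarrow> nat \<Rightarrow> real"
  assumes "0 < n" and rows: "\<And>i. i < n \<Longrightarrow> (\<Sum>j<n. M i j) = 1"
  shows "\<exists>c<n. (\<Sum>i<n. M i c) \<le> 1"
proof (rule ccontr)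
  assume "\<not> ?thesis"
  then have "(\<Sum>c<n. 1) < (\<Sum>c<n. \<Sum>i<n. M i c)"
    using \<open>0 < n\<close> by (intro sum_strict_mono) auto
  also have "\<dots> = (\<Sum>i<n. \<Sum>c<n. M i c)" by (rule sum.swap)
  also have "\<dots> = (\<Sum>i<n. 1)" using rows by simp
  finally show False by simp
qed

section \<open>The polynomials \<open>P\<^sub>k\<close> on substochastic vectors\<close>

definition substoch :: "nat \<Rightarrow> (nat \<Rightarrow> real) set" where
  "substoch k = {x. (\<forall>i<k. 0 \<le> x i) \<and> (\<Sum>i<k. x i) \<le> 1}"

lemma stoch_subset_substoch: "stoch k \<subseteq> substoch k"
  by (auto simp: stoch_def substoch_def)

lemma substoch_le_1:
  assumes "x \<in> substoch k" "i < k"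
  shows "x i \<le> 1"
proof -
  have "x i \<le> (\<Sum>j<k. x j)"
    using assms by (intro member_le_sum) (auto simp: substoch_def)
  then show ?thesis using assms(1) by (simp add: substoch_def)
qed

lemma Pk_nonneg: "0 \<le> Pk m p x"
  unfolding Pk_def by (intro sum_nonneg mult_nonneg_nonneg prod_nonneg) auto

lemma Pk_le_card:
  assumes "0 \<le> p" "x \<in> substoch m"
  shows "Pk m p x \<le> m"
proof -
  have x01: "0 \<le> x i \<and> x i \<le> 1" if "i < m" for i
    using assms(2) substoch_le_1[OF assms(2) that] that by (simp add: substoch_def)
  have "Pk m p x \<le> (\<Sum>i<m. 1)"
    unfolding Pk_def
  proof (rule sum_mono)
    fix i assume "i \<in> {..<m}"
    then show "x i powr (1/p) * (\<Prod>j\<in>{..<m} - {i}. (1 - x j) powr (1/p)) \<le> 1"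
      using assms(1) x01
      by (intro mult_le_one powr_le1 prod_le_1 prod_nonneg conjI) auto
  qed
  then show ?thesis by simp
qed

lemma Pk_le_w:
  assumes "0 \<le> p" "y \<in> stoch m"
  shows "Pk m p y \<le> w m p"
  unfolding w_def
proof (rule cSup_upper)
  show "bdd_above (Pk m p ` stoch m)"
    using Pk_le_card[OF assms(1)] stoch_subset_substoch by (intro bdd_aboveI2) blast
qed (use assms(2) in simp)

lemma Pk_single_support:
  assumes "b < m" "\<And>i. i < m \<Longrightarrow> i \<noteq> b \<Longrightarrow> x i = 0"
  shows "Pk m p x = x b powr (1/p)"
proof -
  have "Pk m p x = (\<Sum>i<m. if i = b then x b powr (1/p) else 0)"
    unfolding Pk_def using assms(2) by (intro sum.cong refl) (auto intro!: prod.neutral)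
  then show ?thesis using assms(1) by simp
qed

lemma one_le_w:
  assumes "0 \<le> p" "0 < m"
  shows "1 \<le> w m p"
proof -
  let ?e = "\<lambda>i. if i = 0 then 1 else 0 :: real"
  have "?e \<in> stoch m" using assms(2) by (simp add: stoch_def)
  moreover have "Pk m p ?e = 1" using assms(2) by (subst Pk_single_support) auto
  ultimately show ?thesis using Pk_le_w[OF assms(1)] by metis
qed

text \<open>With \<open>u\<^sub>i = 1 + x\<^sub>i (D - 1)\<close>, the vector \<open>y\<^sub>i = D x\<^sub>i / u\<^sub>i\<close> has odds
  \<open>y\<^sub>i / (1 - y\<^sub>i) = D x\<^sub>i / (1 - x\<^sub>i)\<close>.\<close>

lemma Pk_odds_rescale:
  fixes x :: "nat \<Rightarrow> real" and D :: real
  defines "u \<equiv> \<lambda>i. 1 + x i * (D - 1)"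
  assumes x: "x \<in> substoch m" and D: "1 \<le> D"
  shows "Pk m p (\<lambda>i. D * x i / u i) = (D / (\<Prod>i<m. u i)) powr (1/p) * Pk m p x"
  unfolding Pk_def sum_distrib_left
proof (intro sum.cong refl)
  fix i assume i: "i \<in> {..<m}"
  let ?q = "1 / p"
  let ?P = "\<Prod>j\<in>{..<m} - {i}. (1 - x j) powr ?q"
  let ?V = "\<Prod>j\<in>{..<m} - {i}. u j powr ?q"
  have u_pos: "0 < u j" if "j < m" for j
    using x D that by (simp add: u_def substoch_def add_pos_nonneg)
  have powr_pos: "0 < u j powr ?q" if "j < m" for j
    using u_pos[OF that] by simp
  have one_minus: "1 - D * x j / u j = (1 - x j) / u j" if "j < m" for j
  proof -
    have "1 - D * x j / u j = (u j - D * x j) / u j"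
      using u_pos[OF that] by (simp add: diff_divide_distrib)
    also have "\<dots> = (1 - x j) / u j" by (simp add: u_def algebra_simps)
    finally show ?thesis .
  qed
  have "(\<Prod>j\<in>{..<m} - {i}. (1 - D * x j / u j) powr ?q) = ?P / ?V"
    by (simp add: one_minus powr_divide prod_dividef)
  moreover have "(\<Prod>i<m. u i) powr ?q = u i powr ?q * ?V"
    using i by (simp add: prod.remove powr_mult prod_powr_distrib)
  moreover have "0 < u i powr ?q" "0 < ?V"
    using i powr_pos by (auto intro!: prod_pos)
  ultimately show "(D * x i / u i) powr ?q * (\<Prod>j\<in>{..<m} - {i}. (1 - D * x j / u j) powr ?q)
      = (D / (\<Prod>i<m. u i)) powr ?q * (x i powr ?q * ?P)"
    by (simp add: powr_divide powr_mult)
qed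

text \<open>Weierstrass product inequality for the numbers \<open>1 - 1 / u\<^sub>i = (D - 1) y\<^sub>i / D\<close>.\<close>

lemma prod_odds_rescale_le:
  fixes x :: "nat \<Rightarrow> real" and D :: real
  defines "u \<equiv> \<lambda>i. 1 + x i * (D - 1)"
  assumes x: "x \<in> substoch m" and D: "1 \<le> D"
    and sum_eq_1: "(\<Sum>i<m. D * x i / u i) = 1"
  shows "(\<Prod>i<m. u i) \<le> D"
proof -
  have u_ge_1: "1 \<le> u i" if "i < m" for i
    using x D that by (simp add: u_def substoch_def)
  have "1 - (\<Sum>i<m. 1 - 1 / u i) \<le> (\<Prod>i<m. 1 - (1 - 1 / u i))"
  proof (rule Weierstrass_prod_ineq)
    fix i assume "i \<in> {..<m}"
    then have "1 \<le> u i" "0 < u i" using u_ge_1 by fastforce+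
    then show "1 - 1 / u i \<in> {0..1}" by (simp add: field_simps)
  qed
  moreover have "(\<Sum>i<m. 1 - 1 / u i) = (D - 1) / D"
  proof -
    have "1 - 1 / u i = (D - 1) / D * (D * x i / u i)" if "i < m" for i
      using u_ge_1[OF that] D by (simp add: field_simps) (simp add: u_def algebra_simps)
    then have "(\<Sum>i<m. 1 - 1 / u i) = (D - 1) / D * (\<Sum>i<m. D * x i / u i)"
      by (simp add: sum_distrib_left)
    then show ?thesis using sum_eq_1 by simp
  qed
  ultimately have "1 / D \<le> 1 / (\<Prod>i<m. u i)"
    using D by (simp add: prod_dividef field_simps)
  moreover have "0 < (\<Prod>i<m. u i)"
    using u_ge_1 by (intro prod_pos) (meson lessThan_iff less_le_trans zero_less_one)
  ultimately show ?thesis using D by (simp add: divide_simps)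
qed

lemma half_le_odds_rescale:
  fixes t M :: real
  assumes "0 \<le> t" "1 \<le> M" "1 \<le> M * t"
  shows "1/2 \<le> M * t / (1 + t * (M - 1))"
proof -
  have "1 + t * (M - 1) \<le> 2 * (M * t)" using assms by (simp add: algebra_simps)
  moreover have "0 < 1 + t * (M - 1)" using assms by (simp add: add_pos_nonneg)
  ultimately show ?thesis by (simp add: divide_simps)
qed

text \<open>The sum is at most \<open>1\<close> for \<open>D = 1\<close>, and for \<open>D = 1 / x a + 1 / x b\<close> the summands
  of \<open>a\<close> and \<open>b\<close> are each at least \<open>1/2\<close>; apply the intermediate value theorem.\<close>

lemma exists_odds_rescale_stoch:
  fixes x :: "nat \<Rightarrow> real"
  assumes x: "x \<in> substoch m"
    and ab: "a < m" "b < m" "a \<noteq> b" "0 < x a" "0 < x b"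
  shows "\<exists>D\<ge>1. (\<Sum>i<m. D * x i / (1 + x i * (D - 1))) = 1"
proof -
  define h where "h D = (\<Sum>i<m. D * x i / (1 + x i * (D - 1)))" for D
  define M where "M = 1 / x a + 1 / x b"
  have x0: "0 \<le> x i" if "i < m" for i using x that by (simp add: substoch_def)
  have M_ge_1: "1 \<le> M" using ab substoch_le_1[OF x] by (simp add: M_def add_increasing)
  have "h 1 \<le> 1" using x by (simp add: h_def substoch_def)
  moreover have "1 \<le> h M"
  proof -
    have "1 \<le> M * x a" "1 \<le> M * x b"
      using ab by (simp_all add: M_def algebra_simps)
    then have "1/2 \<le> M * x a / (1 + x a * (M - 1))" "1/2 \<le> M * x b / (1 + x b * (M - 1))"
      using half_le_odds_rescale[OF less_imp_le[OF ab(4)] M_ge_1]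
        half_le_odds_rescale[OF less_imp_le[OF ab(5)] M_ge_1] by blast+
    moreover have "(\<Sum>i\<in>{a,b}. M * x i / (1 + x i * (M - 1)))
        = M * x a / (1 + x a * (M - 1)) + M * x b / (1 + x b * (M - 1))"
      using ab(3) by simp
    ultimately have "1 \<le> (\<Sum>i\<in>{a,b}. M * x i / (1 + x i * (M - 1)))"
      by linarith
    also have "\<dots> \<le> h M"
      unfolding h_def using ab x0 M_ge_1
      by (intro sum_mono2) (auto intro!: divide_nonneg_nonneg add_nonneg_nonneg)
    finally show ?thesis .
  qed
  moreover have "continuous_on {1..M} h"
    unfolding h_def
  proof (intro continuous_intros ballI)
    fix D i assume "D \<in> {1..M}" "i \<in> {..<m}"
    then have "0 \<le> x i * (D - 1)" using x0 by simp
    then show "1 + x i * (D - 1) \<noteq> 0" by linarith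
  qed
  ultimately obtain D where "1 \<le> D" "h D = 1" using IVT'[OF _ _ M_ge_1] by blast
  then show ?thesis by (auto simp: h_def)
qed

lemma substoch_single_support:
  assumes "0 < m" "x \<in> substoch m" "\<not> (\<exists>a<m. \<exists>b<m. a \<noteq> b \<and> 0 < x a \<and> 0 < x b)"
  obtains b where "b < m" "\<And>i. i < m \<Longrightarrow> i \<noteq> b \<Longrightarrow> x i = 0"
proof -
  have x0: "0 \<le> x i" if "i < m" for i using assms(2) that by (simp add: substoch_def)
  show ?thesis
  proof (cases "\<exists>b<m. 0 < x b")
    case True
    then show ?thesis using assms(3) x0 that by (metis order.not_eq_order_implies_strict)
  next
    case False
    then show ?thesis using assms(1) x0 that by (metis order.not_eq_order_implies_strict)
  qed
qed

lemma Pk_substoch_le_w: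
  assumes "0 < p" "0 < m" and x: "x \<in> substoch m"
  shows "Pk m p x \<le> w m p"
proof (cases "\<exists>a<m. \<exists>b<m. a \<noteq> b \<and> 0 < x a \<and> 0 < x b")
  case True
  then obtain a b where ab: "a < m" "b < m" "a \<noteq> b" "0 < x a" "0 < x b" by blast
  obtain D where D: "1 \<le> D" and sum_eq_1: "(\<Sum>i<m. D * x i / (1 + x i * (D - 1))) = 1"
    using exists_odds_rescale_stoch[OF x ab] by blast
  define u where "u i = 1 + x i * (D - 1)" for i
  have u_ge_1: "1 \<le> u i" if "i < m" for i
    using x D that by (simp add: u_def substoch_def)
  have "(\<Prod>i<m. u i) \<le> D"
    using prod_odds_rescale_le[OF x D] sum_eq_1 by (simp add: u_def)
  moreover have "0 < (\<Prod>i<m. u i)"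
    using u_ge_1 by (intro prod_pos) (meson lessThan_iff less_le_trans zero_less_one)
  ultimately have "1 \<le> (D / (\<Prod>i<m. u i)) powr (1/p)"
    using assms(1) by (intro ge_one_powr_ge_zero) auto
  then have "Pk m p x \<le> (D / (\<Prod>i<m. u i)) powr (1/p) * Pk m p x"
    using mult_right_mono[OF _ Pk_nonneg] by fastforce
  also have "\<dots> = Pk m p (\<lambda>i. D * x i / u i)"
    using Pk_odds_rescale[OF x D] by (simp add: u_def)
  also have "\<dots> \<le> w m p"
  proof (rule Pk_le_w)
    show "(\<lambda>i. D * x i / u i) \<in> stoch m"
      using x D u_ge_1 sum_eq_1 by (auto simp: stoch_def substoch_def u_def)
  qed (use assms(1) in simp)
  finally show ?thesis .
next
  case False
  \<comment> \<open>Then no rescaling reaches a stochastic vector, but only one term of \<open>P\<^sub>m\<close> survives.\<close>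
  obtain b where b: "b < m" "\<And>i. i < m \<Longrightarrow> i \<noteq> b \<Longrightarrow> x i = 0"
    using substoch_single_support[OF assms(2) x False] by blast
  have "Pk m p x = x b powr (1/p)" by (rule Pk_single_support[OF b])
  also have "\<dots> \<le> 1"
    using assms(1) x b(1) substoch_le_1[OF x b(1)] by (intro powr_le1) (auto simp: substoch_def)
  also have "\<dots> \<le> w m p" using assms by (intro one_le_w) auto
  finally show ?thesis .
qed

section \<open>The induction step\<close>

lemma prod_lessThan_transpose:
  fixes f :: "nat \<Rightarrow> 'a::comm_monoid_mult"
  assumes "b \<le> n"
  shows "(\<Prod>i<n. f (Transposition.transpose n b i)) = (\<Prod>k\<in>{..<Suc n} - {b}. f k)"
proof -
  have "{..<n} = {..<Suc n} - {n}" by auto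
  then have "Transposition.transpose n b ` {..<n} = {..<Suc n} - {b}"
    using assms by (simp add: image_set_diff[OF inj_transpose])
  then show ?thesis
    using prod.reindex[OF inj_on_transpose, of f n b "{..<n}"] by (simp add: o_def)
qed

lemma per_le_Pk_last_column:
  assumes bound: "\<And>A. \<forall>i<n. row_pnorm p n A i = 1 \<Longrightarrow> per n A \<le> W"
    and "0 < p"
    and nonneg: "\<And>i j. 0 \<le> C i j"
    and rows: "\<And>i. i < Suc n \<Longrightarrow> (\<Sum>j<Suc n. C i j powr p) = 1"
  shows "per (Suc n) C \<le> W * Pk (Suc n) p (\<lambda>i. C i n powr p)"
proof -
  let ?x = "\<lambda>i. C i n powr p" and ?q = "1 / p"
  have minor: "per n (\<lambda>i j. C (Transposition.transpose n b i) j)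
      \<le> W * (\<Prod>k\<in>{..<Suc n} - {b}. (1 - ?x k) powr ?q)" if "b < Suc n" for b
  proof -
    let ?\<tau> = "Transposition.transpose n b"
    have "row_pnorm p n (\<lambda>i j. C (?\<tau> i) j) i = (1 - ?x (?\<tau> i)) powr ?q" if "i < n" for i
    proof -
      have "?\<tau> i < Suc n" using \<open>b < Suc n\<close> that by (simp add: Transposition.transpose_def)
      then have "(\<Sum>j<n. C (?\<tau> i) j powr p) = 1 - ?x (?\<tau> i)"
        using rows by (simp add: algebra_simps)
      then show ?thesis using nonneg by (simp add: row_pnorm_def)
    qed
    then have "(\<Prod>i<n. row_pnorm p n (\<lambda>i j. C (?\<tau> i) j) i) = (\<Prod>i<n. (1 - ?x (?\<tau> i)) powr ?q)"
      by simp
    also have "\<dots> = (\<Prod>k\<in>{..<Suc n} - {b}. (1 - ?x k) powr ?q)"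
      using \<open>b < Suc n\<close> by (intro prod_lessThan_transpose) simp
    finally show ?thesis
      using per_le_mult_prod_row_pnorm[OF bound \<open>0 < p\<close>] by metis
  qed
  have "per (Suc n) C = (\<Sum>b<Suc n. C b n * per n (\<lambda>i j. C (Transposition.transpose n b i) j))"
    by (rule per_expand_last_column)
  also have "\<dots> \<le> (\<Sum>b<Suc n. ?x b powr ?q * (W * (\<Prod>k\<in>{..<Suc n} - {b}. (1 - ?x k) powr ?q)))"
  proof (rule sum_mono)
    fix b assume "b \<in> {..<Suc n}"
    moreover have "C b n = ?x b powr ?q" using nonneg \<open>0 < p\<close> by (simp add: powr_powr)
    ultimately show "C b n * per n (\<lambda>i j. C (Transposition.transpose n b i) j)
        \<le> ?x b powr ?q * (W * (\<Prod>k\<in>{..<Suc n} - {b}. (1 - ?x k) powr ?q))"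
      using minor nonneg by (metis lessThan_iff mult_left_mono)
  qed
  also have "\<dots> = W * Pk (Suc n) p ?x"
    unfolding Pk_def sum_distrib_left by (simp add: algebra_simps)
  finally show ?thesis .
qed

lemma per_le_mult_w_Suc:
  assumes bound: "\<And>A. \<forall>i<n. row_pnorm p n A i = 1 \<Longrightarrow> per n A \<le> W"
    and "0 \<le> W" "0 < p"
    and A: "\<forall>i<Suc n. row_pnorm p (Suc n) A i = 1"
  shows "per (Suc n) A \<le> W * w (Suc n) p"
proof -
  have rows: "(\<Sum>j<Suc n. \<bar>A i j\<bar> powr p) = 1" if "i < Suc n" for i
    using A that row_pnorm_eq_1_iff[OF \<open>0 < p\<close>] by blast
  obtain c where c: "c < Suc n" "(\<Sum>i<Suc n. \<bar>A i c\<bar> powr p) \<le> 1"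
    using exists_column_sum_le_1[of "Suc n" "\<lambda>i j. \<bar>A i j\<bar> powr p"] rows by auto
  define \<tau> where "\<tau> = Transposition.transpose c n"
  have \<tau>: "\<tau> permutes {..<Suc n}" using c(1) by (simp add: \<tau>_def permutes_swap_id)
  define C where "C = (\<lambda>i j. \<bar>A i (\<tau> j)\<bar>)"
  have "per (Suc n) A \<le> per (Suc n) C"
    using per_le_per_abs[of "Suc n" A] per_permute_columns[OF \<tau>, of "\<lambda>i j. \<bar>A i j\<bar>"]
    by (simp add: C_def)
  also have "\<dots> \<le> W * Pk (Suc n) p (\<lambda>i. C i n powr p)"
  proof (rule per_le_Pk_last_column[OF bound \<open>0 < p\<close>])
    show "0 \<le> C i j" for i j by (simp add: C_def)
  next
    fix i assume "i < Suc n"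
    then show "(\<Sum>j<Suc n. C i j powr p) = 1"
      using rows sum.permute[OF \<tau>, of "\<lambda>j. \<bar>A i j\<bar> powr p"] by (simp add: C_def o_def)
  qed
  also have "\<dots> \<le> W * w (Suc n) p"
  proof (intro mult_left_mono Pk_substoch_le_w)
    show "(\<lambda>i. C i n powr p) \<in> substoch (Suc n)"
      using c(2) by (simp add: C_def \<tau>_def substoch_def)
  qed (use \<open>0 \<le> W\<close> \<open>0 < p\<close> in auto)
  finally show ?thesis .
qed

lemma per_le_prod_w:
  assumes "0 < p" "\<forall>i<n. row_pnorm p n A i = 1"
  shows "per n A \<le> (\<Prod>k=1..n. w k p)"
  using assms(2)
proof (induction n arbitrary: A)
  case (Suc n)
  have "0 \<le> (\<Prod>k=1..n. w k p)"
    using \<open>0 < p\<close> by (intro prod_nonneg order_trans[OF zero_le_one one_le_w]) auto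
  then have "per (Suc n) A \<le> (\<Prod>k=1..n. w k p) * w (Suc n) p"
    using Suc.IH by (intro per_le_mult_w_Suc[OF _ _ \<open>0 < p\<close> Suc.prems]) blast
  then show ?case by (simp add: prod.nat_ivl_Suc')
qed simp

lemma row_pnorm_id:
  assumes "i < n"
  shows "row_pnorm p n (\<lambda>i j. if i = j then 1 else 0) i = 1"
proof -
  have "(\<Sum>j<n. \<bar>if i = j then 1 else 0\<bar> powr p) = (\<Sum>j<n. if j = i then 1 else 0 :: real)"
    by (intro sum.cong) auto
  then show ?thesis using assms by (simp add: row_pnorm_def)
qed

theorem theorem2p1:
  fixes n :: nat and p :: real
  assumes "1 \<le> p" and "1 \<le> n"
  shows "U n p \<le> (\<Prod>k=1..n. w k p)"
  unfolding U_def
proof (rule cSup_least)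
  show "{per n A |A. \<forall>i<n. row_pnorm p n A i = 1} \<noteq> {}"
    using row_pnorm_id by blast
qed (use per_le_prod_w \<open>1 \<le> p\<close> in auto)

end
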